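(* Let $Y$ be a real random variable and $\mathbf X=(X_1,\dots,X_p)^\top$ a random vector in $\mathbb R^p$. Let $J\subset\{1,\dots,p\}$ be a set of indices, $\mathbf X_J=(X_j)_{j\in J}$ and $\mathbf X_{\bar J}=(X_j)_{j\notin J}$. Assume the additive regression model $$Y = f_J(\mathbf X_J)+f_{\bar J}(\mathbf X_{\bar J})+\varepsilon,$$ where $f_J,f_{\bar J}$ are measurable functions with $\mathbb E[f_J(\mathbf X_J)^2]<\infty$ and $\mathbb E[f_{\bar J}(\mathbf X_{\bar J})^2]<\infty$, and $\varepsilon$ is a random variable with $\mathbb E[\varepsilon\mid\mathbf X]=0$ and $\mathbb E[\varepsilon^2\mid \mathbf X]$ finite. Then the grouped variable importance of $\mathbf X_J$ satisfies $$\mathcal I(\mathbf X_J)=2\,\mathrm{Var}\big[f_J(\mathbf X_J)\big].$$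
   Context: Let $f(\mathbf x)=\mathbb E[Y\mid \mathbf X=\mathbf x]$ be the regression function (here $f(\mathbf x)=f_J(\mathbf x_J)+f_{\bar J}(\mathbf x_{\bar J})$). For a set of indices $J=\{j_1<\dots<j_k\}\subset\{1,\dots,p\}$, let $\mathbf X'_J=(X'_{j_1},\dots,X'_{j_k})^\top$ be a random vector with the same distribution as $\mathbf X_J$, independent of $(\mathbf X,Y)$ (so independent of $Y$ and of all predictors), and let $\mathbf X_{(J)}$ be the vector obtained from $\mathbf X$ by replacing each coordinate $X_{j}$, $j\in J$, by $X'_{j}$. The grouped (permutation) variable importance of $\mathbf X_J$ is $$\mathcal I(\mathbf X_J):=\mathbb E\big[(Y-f(\mathbf X_{(J)}))^2\big]-\mathbb E\big[(Y-f(\mathbf X))^2\big].$$ For a single index $j$, $\mathcal I(X_j)$ denotes $\mathcal I(\mathbf X_{\{j\}})$. *)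

theory Defs
  imports "HOL-Probability.Probability"
begin

definition replace_coords :: "'i set \<Rightarrow> ('i \<Rightarrow> real) \<Rightarrow> ('i \<Rightarrow> real) \<Rightarrow> ('i \<Rightarrow> real)" where
  "replace_coords J x' x = (\<lambda>j. if j \<in> J then x' j else x j)"

text \<open>Grouped permutation variable importance of X_J, for regression function f,
  with X' an independent copy of X_J (only its coordinates in J are used).\<close>
definition grouped_importance ::
  "'a measure \<Rightarrow> ('a \<Rightarrow> real) \<Rightarrow> (('i \<Rightarrow> real) \<Rightarrow> real) \<Rightarrow> ('a \<Rightarrow> 'i \<Rightarrow> real)
     \<Rightarrow> ('a \<Rightarrow> 'i \<Rightarrow> real) \<Rightarrow> 'i set \<Rightarrow> real" where
  "grouped_importance M Y f X X' J =
     (LINT \<omega>|M. (Y \<omega> - f (replace_coords J (X' \<omega>) (X \<omega>)))\<^sup>2)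
   - (LINT \<omega>|M. (Y \<omega> - f (X \<omega>))\<^sup>2)"

end

theory Submission
  imports Defs
begin

text \<open>Write \<open>A = fJ X\<close> and let \<open>B\<close> be \<open>fJ\<close> applied to \<open>X\<close> with its \<open>J\<close>-coordinates
  replaced by the copy \<open>X'\<close>. As \<open>fJbar\<close> ignores these coordinates, the two residuals are
  \<open>A - B + \<epsilon>\<close> and \<open>\<epsilon>\<close>, so the importance is
  \<open>E[A\<^sup>2] + E[B\<^sup>2] - 2 E[AB] + 2 E[A\<epsilon>] - 2 E[B\<epsilon>]\<close>. Now \<open>B\<close> has the law of \<open>A\<close>;
  \<open>E[A\<epsilon>] = 0\<close> because \<open>E[\<epsilon> | X] = 0\<close>; and \<open>B\<close> is a function of the copy alone, which is
  independent of \<open>(X, Y)\<close>, hence of \<open>A\<close> and \<open>\<epsilon>\<close>, so \<open>E[AB] = (E A)\<^sup>2\<close> and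
  \<open>E[B\<epsilon>] = E B \<cdot> E \<epsilon> = 0\<close>. What remains is \<open>2 (E[A\<^sup>2] - (E A)\<^sup>2) = 2 Var A\<close>.\<close>

lemma integrable_mult_of_square_integrable:
  fixes f g :: "'a \<Rightarrow> real"
  assumes [measurable]: "f \<in> borel_measurable M" "g \<in> borel_measurable M"
    and "integrable M (\<lambda>x. (f x)\<^sup>2)" "integrable M (\<lambda>x. (g x)\<^sup>2)"
  shows "integrable M (\<lambda>x. f x * g x)"
proof (rule Bochner_Integration.integrable_bound[where f="\<lambda>x. (f x)\<^sup>2 + (g x)\<^sup>2"])
  show "integrable M (\<lambda>x. (f x)\<^sup>2 + (g x)\<^sup>2)"
    using assms by auto
  show "AE x in M. norm (f x * g x) \<le> norm ((f x)\<^sup>2 + (g x)\<^sup>2)"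
  proof (rule AE_I2)
    fix x
    have "norm (f x * g x) \<le> 2 * \<bar>f x\<bar> * \<bar>g x\<bar>"
      by (simp add: abs_mult)
    also have "\<dots> \<le> (f x)\<^sup>2 + (g x)\<^sup>2"
      using sum_squares_bound[of "\<bar>f x\<bar>" "\<bar>g x\<bar>"] by simp
    finally show "norm (f x * g x) \<le> norm ((f x)\<^sup>2 + (g x)\<^sup>2)"
      by simp
  qed
qed measurable

lemma subalgebra_vimage_algebra:
  assumes "X \<in> M \<rightarrow>\<^sub>M N"
  shows "subalgebra M (vimage_algebra (space M) X N)"
  using assms measurable_sets[OF assms] measurable_space[OF assms]
  by (auto simp: subalgebra_def sets_vimage_algebra2)

lemma (in prob_space) integral_mult_eq_0_if_cond_exp_eq_0:
  fixes \<epsilon> :: "'a \<Rightarrow> real"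
  assumes [measurable]: "X \<in> M \<rightarrow>\<^sub>M N" "\<epsilon> \<in> borel_measurable M" "\<phi> \<in> borel_measurable N"
    and cond: "AE \<omega> in M. real_cond_exp M (vimage_algebra (space M) X N) \<epsilon> \<omega> = 0"
    and "integrable M (\<lambda>\<omega>. \<phi> (X \<omega>) * \<epsilon> \<omega>)"
  shows "(\<integral>\<omega>. \<phi> (X \<omega>) * \<epsilon> \<omega> \<partial>M) = 0"
proof -
  let ?F = "vimage_algebra (space M) X N"
  interpret finite_measure_subalgebra M ?F
    by unfold_locales (rule subalgebra_vimage_algebra, measurable)
  have "X \<in> ?F \<rightarrow>\<^sub>M N"
    using measurable_space[OF assms(1)] by (auto intro: measurable_vimage_algebra1)
  then have "(\<lambda>\<omega>. \<phi> (X \<omega>)) \<in> borel_measurable ?F"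
    by measurable
  then have "(\<integral>\<omega>. \<phi> (X \<omega>) * \<epsilon> \<omega> \<partial>M) = (\<integral>\<omega>. \<phi> (X \<omega>) * real_cond_exp M ?F \<epsilon> \<omega> \<partial>M)"
    using real_cond_exp_intg(2) assms by simp
  also have "\<dots> = 0"
    using cond by (intro integral_eq_zero_AE) auto
  finally show ?thesis .
qed

lemma (in prob_space) indep_set_mono:
  assumes "indep_set A B" "A' \<subseteq> A" "B' \<subseteq> B"
  shows "indep_set A' B'"
  using assms unfolding indep_sets2_eq by blast

lemma vimage_comp_subset:
  assumes "U \<in> M \<rightarrow>\<^sub>M N" "f \<in> N \<rightarrow>\<^sub>M K"
  shows "{(\<lambda>\<omega>. f (U \<omega>)) -` A \<inter> space M | A. A \<in> sets K} \<subseteq> {U -` A \<inter> space M | A. A \<in> sets N}"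
proof clarify
  fix A assume "A \<in> sets K"
  then have "f -` A \<inter> space N \<in> sets N"
    using assms(2) by measurable
  moreover have "(\<lambda>\<omega>. f (U \<omega>)) -` A \<inter> space M = U -` (f -` A \<inter> space N) \<inter> space M"
    using measurable_space[OF assms(1)] by auto
  ultimately show "\<exists>A'. (\<lambda>\<omega>. f (U \<omega>)) -` A \<inter> space M = U -` A' \<inter> space M \<and> A' \<in> sets N"
    by blast
qed

lemma (in prob_space) indep_var_iff_indep_set:
  assumes "random_variable S U" "random_variable S W"
  shows "indep_var S U S W \<longleftrightarrow>
    indep_set {U -` A \<inter> space M | A. A \<in> sets S} {W -` B \<inter> space M | B. B \<in> sets S}"
proof -
  have "(\<lambda>i. {case_bool U W i -` A \<inter> space M |A. A \<in> sets (case_bool S S i)})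
      = case_bool {U -` A \<inter> space M | A. A \<in> sets S} {W -` B \<inter> space M | B. B \<in> sets S}"
    by (simp add: fun_eq_iff split: bool.split)
  then show ?thesis
    using assms by (simp add: indep_var_def indep_vars_def2 indep_set_def split: bool.split)
qed

lemma (in prob_space) integral_mult_indep_set:
  fixes g :: "'s \<Rightarrow> real" and k :: "'t \<Rightarrow> real"
  assumes indep: "indep_set {U -` A \<inter> space M | A. A \<in> sets S} {W -` B \<inter> space M | B. B \<in> sets T}"
    and [measurable]: "U \<in> M \<rightarrow>\<^sub>M S" "W \<in> M \<rightarrow>\<^sub>M T" "g \<in> borel_measurable S" "k \<in> borel_measurable T"
    and "integrable M (\<lambda>\<omega>. g (U \<omega>))" "integrable M (\<lambda>\<omega>. k (W \<omega>))"
  shows "(\<integral>\<omega>. g (U \<omega>) * k (W \<omega>) \<partial>M) = (\<integral>\<omega>. g (U \<omega>) \<partial>M) * (\<integral>\<omega>. k (W \<omega>) \<partial>M)"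
proof -
  have "indep_set {(\<lambda>\<omega>. g (U \<omega>)) -` A \<inter> space M | A. A \<in> sets borel}
                  {(\<lambda>\<omega>. k (W \<omega>)) -` B \<inter> space M | B. B \<in> sets borel}"
    using indep by (rule indep_set_mono) (simp_all add: vimage_comp_subset)
  then have "indep_var borel (\<lambda>\<omega>. g (U \<omega>)) borel (\<lambda>\<omega>. k (W \<omega>))"
    by (simp add: indep_var_iff_indep_set)
  then show ?thesis
    using assms by (simp add: indep_var_lebesgue_integral)
qed

definition depends_only_on :: "'i set \<Rightarrow> (('i \<Rightarrow> 'b) \<Rightarrow> 'c) \<Rightarrow> bool" where
  "depends_only_on J f \<longleftrightarrow> (\<forall>x y. (\<forall>j\<in>J. x j = y j) \<longrightarrow> f x = f y)"

lemma replace_coords_self [simp]: "replace_coords J x x = x"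
  by (simp add: replace_coords_def)

lemma depends_only_on_replace_coords:
  assumes "depends_only_on J f"
  shows "f (replace_coords J x' x) = f (replace_coords J (restrict x' J) y)"
  using assms by (simp add: depends_only_on_def replace_coords_def)

lemma depends_only_on_compl_replace_coords:
  assumes "depends_only_on (- J) f"
  shows "f (replace_coords J x' x) = f x"
  using assms by (simp add: depends_only_on_def replace_coords_def)

lemma measurable_replace_coords_left [measurable]:
  "(\<lambda>u. replace_coords J u x) \<in> (\<Pi>\<^sub>M j\<in>J. borel) \<rightarrow>\<^sub>M (\<Pi>\<^sub>M i\<in>UNIV. (borel :: real measure))"
proof (rule measurable_PiM_single')
  fix i
  show "(\<lambda>u. replace_coords J u x i) \<in> borel_measurable (\<Pi>\<^sub>M j\<in>J. borel)"
    by (cases "i \<in> J") (simp_all add: replace_coords_def)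
qed (auto simp: replace_coords_def)

lemma measurable_replace_coords_copy:
  fixes f :: "('i \<Rightarrow> real) \<Rightarrow> real"
  assumes "(\<lambda>\<omega>. restrict (X' \<omega>) J) \<in> M \<rightarrow>\<^sub>M (\<Pi>\<^sub>M j\<in>J. borel)"
    and "f \<in> borel_measurable (\<Pi>\<^sub>M i\<in>UNIV. borel)" "depends_only_on J f"
  shows "(\<lambda>\<omega>. f (replace_coords J (X' \<omega>) (Z \<omega>))) \<in> borel_measurable M"
proof -
  have "(\<lambda>\<omega>. f (replace_coords J (X' \<omega>) (Z \<omega>))) = (\<lambda>\<omega>. f (replace_coords J (restrict (X' \<omega>) J) (\<lambda>_. 0)))"
    using depends_only_on_replace_coords[OF assms(3)] by blast
  then show ?thesis
    using assms(1,2) by simp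
qed

lemma
  fixes f :: "('i \<Rightarrow> real) \<Rightarrow> real" and \<phi> :: "real \<Rightarrow> real"
  assumes [measurable]: "X \<in> M \<rightarrow>\<^sub>M (\<Pi>\<^sub>M i\<in>UNIV. borel)"
      "(\<lambda>\<omega>. restrict (X' \<omega>) J) \<in> M \<rightarrow>\<^sub>M (\<Pi>\<^sub>M j\<in>J. borel)"
    and distr: "distr M (\<Pi>\<^sub>M j\<in>J. borel) (\<lambda>\<omega>. restrict (X' \<omega>) J)
             = distr M (\<Pi>\<^sub>M j\<in>J. borel) (\<lambda>\<omega>. restrict (X \<omega>) J)"
    and [measurable]: "f \<in> borel_measurable (\<Pi>\<^sub>M i\<in>UNIV. borel)" "\<phi> \<in> borel_measurable borel"
    and dep: "depends_only_on J f"
  shows integrable_replace_coords_copy_iff: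
      "integrable M (\<lambda>\<omega>. \<phi> (f (replace_coords J (X' \<omega>) (Z \<omega>)))) \<longleftrightarrow> integrable M (\<lambda>\<omega>. \<phi> (f (X \<omega>)))"
    and integral_replace_coords_copy:
      "(\<integral>\<omega>. \<phi> (f (replace_coords J (X' \<omega>) (Z \<omega>))) \<partial>M) = (\<integral>\<omega>. \<phi> (f (X \<omega>)) \<partial>M)"
proof -
  define g where "g u = \<phi> (f (replace_coords J u (\<lambda>_. 0)))" for u
  have [measurable]: "g \<in> borel_measurable (\<Pi>\<^sub>M j\<in>J. borel)"
    unfolding g_def[abs_def] by measurable
  have copy: "(\<lambda>\<omega>. \<phi> (f (replace_coords J (X' \<omega>) (Z \<omega>)))) = (\<lambda>\<omega>. g (restrict (X' \<omega>) J))"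
    and orig: "(\<lambda>\<omega>. \<phi> (f (X \<omega>))) = (\<lambda>\<omega>. g (restrict (X \<omega>) J))"
    using depends_only_on_replace_coords[OF dep, of "X' \<omega>" "Z \<omega>" "\<lambda>_. 0" for \<omega>]
      depends_only_on_replace_coords[OF dep, of "X \<omega>" "X \<omega>" "\<lambda>_. 0" for \<omega>]
    by (simp_all add: g_def)
  have [measurable]: "(\<lambda>\<omega>. restrict (X \<omega>) J) \<in> M \<rightarrow>\<^sub>M (\<Pi>\<^sub>M j\<in>J. borel)"
    by measurable
  show "integrable M (\<lambda>\<omega>. \<phi> (f (replace_coords J (X' \<omega>) (Z \<omega>)))) \<longleftrightarrow> integrable M (\<lambda>\<omega>. \<phi> (f (X \<omega>)))"
  proof -
    have "integrable M (\<lambda>\<omega>. g (restrict (X' \<omega>) J))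
        \<longleftrightarrow> integrable (distr M (\<Pi>\<^sub>M j\<in>J. borel) (\<lambda>\<omega>. restrict (X' \<omega>) J)) g"
      by (simp add: integrable_distr_eq)
    also have "\<dots> \<longleftrightarrow> integrable M (\<lambda>\<omega>. g (restrict (X \<omega>) J))"
      by (simp add: distr integrable_distr_eq)
    finally show ?thesis
      unfolding copy orig .
  qed
  show "(\<integral>\<omega>. \<phi> (f (replace_coords J (X' \<omega>) (Z \<omega>))) \<partial>M) = (\<integral>\<omega>. \<phi> (f (X \<omega>)) \<partial>M)"
  proof -
    have "(\<integral>\<omega>. g (restrict (X' \<omega>) J) \<partial>M)
        = integral\<^sup>L (distr M (\<Pi>\<^sub>M j\<in>J. borel) (\<lambda>\<omega>. restrict (X' \<omega>) J)) g"
      by (simp add: integral_distr)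
    also have "\<dots> = (\<integral>\<omega>. g (restrict (X \<omega>) J) \<partial>M)"
      by (simp add: distr integral_distr)
    finally show ?thesis
      unfolding copy orig .
  qed
qed

lemma (in prob_space) integral_mult_replace_coords_copy_indep:
  fixes f :: "('i \<Rightarrow> real) \<Rightarrow> real" and k :: "'t \<Rightarrow> real" and \<xi> :: "'a \<Rightarrow> real"
  assumes indep: "indep_set {(\<lambda>\<omega>. restrict (X' \<omega>) J) -` A \<inter> space M | A. A \<in> sets (\<Pi>\<^sub>M j\<in>J. borel)}
                            {W -` B \<inter> space M | B. B \<in> sets T}"
    and [measurable]: "(\<lambda>\<omega>. restrict (X' \<omega>) J) \<in> M \<rightarrow>\<^sub>M (\<Pi>\<^sub>M j\<in>J. borel)" "W \<in> M \<rightarrow>\<^sub>M T"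
      "f \<in> borel_measurable (\<Pi>\<^sub>M i\<in>UNIV. borel)" "k \<in> borel_measurable T"
    and dep: "depends_only_on J f" and \<xi>: "\<And>\<omega>. \<omega> \<in> space M \<Longrightarrow> \<xi> \<omega> = k (W \<omega>)"
    and f_int: "integrable M (\<lambda>\<omega>. f (replace_coords J (X' \<omega>) (Z \<omega>)))" and "integrable M \<xi>"
  shows "(\<integral>\<omega>. f (replace_coords J (X' \<omega>) (Z \<omega>)) * \<xi> \<omega> \<partial>M)
       = (\<integral>\<omega>. f (replace_coords J (X' \<omega>) (Z \<omega>)) \<partial>M) * expectation \<xi>"
proof -
  have copy: "f (replace_coords J (X' \<omega>) (Z \<omega>)) = f (replace_coords J (restrict (X' \<omega>) J) (\<lambda>_. 0))" for \<omega>
    using depends_only_on_replace_coords[OF dep] .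
  have "integrable M (\<lambda>\<omega>. k (W \<omega>))"
    using \<open>integrable M \<xi>\<close> \<xi> by (simp cong: Bochner_Integration.integrable_cong)
  then have "(\<integral>\<omega>. f (replace_coords J (X' \<omega>) (Z \<omega>)) * k (W \<omega>) \<partial>M)
      = (\<integral>\<omega>. f (replace_coords J (X' \<omega>) (Z \<omega>)) \<partial>M) * (\<integral>\<omega>. k (W \<omega>) \<partial>M)"
    using integral_mult_indep_set[OF indep, of "\<lambda>u. f (replace_coords J u (\<lambda>_. 0))" k] f_int
    unfolding copy by simp
  then show ?thesis
    using \<xi> by (simp cong: Bochner_Integration.integral_cong)
qed

lemma grouped_importance_additive_model:
  assumes model: "\<And>\<omega>. \<omega> \<in> space M \<Longrightarrow> Y \<omega> = fJ (X \<omega>) + fJbar (X \<omega>) + \<epsilon> \<omega>"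
    and "depends_only_on (- J) fJbar"
  shows "grouped_importance M Y (\<lambda>x. fJ x + fJbar x) X X' J
       = (\<integral>\<omega>. (fJ (X \<omega>) - fJ (replace_coords J (X' \<omega>) (X \<omega>)) + \<epsilon> \<omega>)\<^sup>2 \<partial>M) - (\<integral>\<omega>. (\<epsilon> \<omega>)\<^sup>2 \<partial>M)"
  unfolding grouped_importance_def
  by (intro arg_cong2[where f="(-)"] Bochner_Integration.integral_cong)
     (simp_all add: model depends_only_on_compl_replace_coords[OF assms(2)] algebra_simps)

lemma (in prob_space) expectation_square_diff_eq_twice_variance:
  fixes A B e :: "'a \<Rightarrow> real"
  assumes [measurable]: "A \<in> borel_measurable M" "B \<in> borel_measurable M" "e \<in> borel_measurable M"
    and A2: "integrable M (\<lambda>\<omega>. (A \<omega>)\<^sup>2)" and B2: "integrable M (\<lambda>\<omega>. (B \<omega>)\<^sup>2)"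
    and e2: "integrable M (\<lambda>\<omega>. (e \<omega>)\<^sup>2)"
    and Ae: "expectation (\<lambda>\<omega>. A \<omega> * e \<omega>) = 0" and Be: "expectation (\<lambda>\<omega>. B \<omega> * e \<omega>) = 0"
    and AB: "expectation (\<lambda>\<omega>. A \<omega> * B \<omega>) = (expectation A)\<^sup>2"
    and same_moment: "expectation (\<lambda>\<omega>. (B \<omega>)\<^sup>2) = expectation (\<lambda>\<omega>. (A \<omega>)\<^sup>2)"
  shows "expectation (\<lambda>\<omega>. (A \<omega> - B \<omega> + e \<omega>)\<^sup>2) - expectation (\<lambda>\<omega>. (e \<omega>)\<^sup>2) = 2 * variance A"
proof -
  have "(\<lambda>\<omega>. (A \<omega> - B \<omega> + e \<omega>)\<^sup>2)
      = (\<lambda>\<omega>. (A \<omega>)\<^sup>2 + (B \<omega>)\<^sup>2 + (e \<omega>)\<^sup>2 - 2 * (A \<omega> * B \<omega>) + 2 * (A \<omega> * e \<omega>) - 2 * (B \<omega> * e \<omega>))"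
    by (simp add: fun_eq_iff power2_eq_square algebra_simps)
  moreover have "integrable M (\<lambda>\<omega>. A \<omega> * B \<omega>)" "integrable M (\<lambda>\<omega>. A \<omega> * e \<omega>)"
      "integrable M (\<lambda>\<omega>. B \<omega> * e \<omega>)"
    using A2 B2 e2 by (simp_all add: integrable_mult_of_square_integrable)
  moreover have "variance A = expectation (\<lambda>\<omega>. (A \<omega>)\<^sup>2) - (expectation A)\<^sup>2"
    using A2 by (simp add: variance_eq square_integrable_imp_integrable)
  ultimately show ?thesis
    using A2 B2 e2 Ae Be AB same_moment by simp
qed

theorem proposition1:
  fixes M :: "'a measure"
    and X X' :: "'a \<Rightarrow> ('i::finite \<Rightarrow> real)"
    and Y \<epsilon> :: "'a \<Rightarrow> real"
    and J :: "'i set"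
    and fJ fJbar :: "('i \<Rightarrow> real) \<Rightarrow> real"
  assumes prob: "prob_space M"
    and X_meas: "X \<in> M \<rightarrow>\<^sub>M (\<Pi>\<^sub>M i\<in>UNIV. borel)"
    and Y_meas: "Y \<in> borel_measurable M"
    and eps_meas: "\<epsilon> \<in> borel_measurable M"
    and fJ_meas: "fJ \<in> borel_measurable (\<Pi>\<^sub>M i\<in>UNIV. borel)"
    and fJbar_meas: "fJbar \<in> borel_measurable (\<Pi>\<^sub>M i\<in>UNIV. borel)"
    and fJ_dep: "\<And>x y. (\<forall>j\<in>J. x j = y j) \<Longrightarrow> fJ x = fJ y"
    and fJbar_dep: "\<And>x y. (\<forall>j\<in>-J. x j = y j) \<Longrightarrow> fJbar x = fJbar y"
    and fJ_sq: "integrable M (\<lambda>\<omega>. (fJ (X \<omega>))\<^sup>2)"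
    and fJbar_sq: "integrable M (\<lambda>\<omega>. (fJbar (X \<omega>))\<^sup>2)"
    and model: "\<And>\<omega>. \<omega> \<in> space M \<Longrightarrow> Y \<omega> = fJ (X \<omega>) + fJbar (X \<omega>) + \<epsilon> \<omega>"
    and eps_sq: "integrable M (\<lambda>\<omega>. (\<epsilon> \<omega>)\<^sup>2)"
    and eps_cond: "AE \<omega> in M. real_cond_exp M (vimage_algebra (space M) X (\<Pi>\<^sub>M i\<in>UNIV. borel)) \<epsilon> \<omega> = 0"
    and X'_meas: "(\<lambda>\<omega>. restrict (X' \<omega>) J) \<in> M \<rightarrow>\<^sub>M (\<Pi>\<^sub>M j\<in>J. borel)"
    and X'_distr: "distr M (\<Pi>\<^sub>M j\<in>J. borel) (\<lambda>\<omega>. restrict (X' \<omega>) J)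
                 = distr M (\<Pi>\<^sub>M j\<in>J. borel) (\<lambda>\<omega>. restrict (X \<omega>) J)"
    and X'_indep: "prob_space.indep_set M
                     {(\<lambda>\<omega>. restrict (X' \<omega>) J) -` A \<inter> space M | A. A \<in> sets (\<Pi>\<^sub>M j\<in>J. borel)}
                     {(\<lambda>\<omega>. (X \<omega>, Y \<omega>)) -` B \<inter> space M | B. B \<in> sets ((\<Pi>\<^sub>M i\<in>UNIV. borel) \<Otimes>\<^sub>M borel)}"
  shows "grouped_importance M Y (\<lambda>x. fJ x + fJbar x) X X' J
       = 2 * (LINT \<omega>|M. (fJ (X \<omega>) - (LINT \<omega>'|M. fJ (X \<omega>')))\<^sup>2)"
proof -
  interpret prob_space M by (fact prob)
  note [measurable] = X_meas Y_meas eps_meas fJ_meas fJbar_meas X'_meas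
  have dep: "depends_only_on J fJ" "depends_only_on (- J) fJbar"
    using fJ_dep fJbar_dep by (auto simp: depends_only_on_def)
  let ?A = "\<lambda>\<omega>. fJ (X \<omega>)"
  let ?B = "\<lambda>\<omega>. fJ (replace_coords J (X' \<omega>) (X \<omega>))"
  have [measurable]: "?B \<in> borel_measurable M"
    by (rule measurable_replace_coords_copy[OF X'_meas fJ_meas dep(1)])
  note copy_law = integrable_replace_coords_copy_iff[OF X_meas X'_meas X'_distr fJ_meas _ dep(1), where Z=X]
    integral_replace_coords_copy[OF X_meas X'_meas X'_distr fJ_meas _ dep(1), where Z=X]
  have B2: "integrable M (\<lambda>\<omega>. (?B \<omega>)\<^sup>2)"
    and same_moment: "expectation (\<lambda>\<omega>. (?B \<omega>)\<^sup>2) = expectation (\<lambda>\<omega>. (?A \<omega>)\<^sup>2)"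
    and same_mean: "expectation ?B = expectation ?A"
    using copy_law[where \<phi>="\<lambda>t. t\<^sup>2"] copy_law(2)[where \<phi>="\<lambda>t. t"] fJ_sq by simp_all
  have A1: "integrable M ?A" and B1: "integrable M ?B" and eps1: "integrable M \<epsilon>"
    using fJ_sq B2 eps_sq by (simp_all add: square_integrable_imp_integrable)
  have mean_eps: "expectation \<epsilon> = 0"
    using integral_mult_eq_0_if_cond_exp_eq_0[OF X_meas eps_meas _ eps_cond, of "\<lambda>_. 1"] eps1 by simp
  have Ae: "expectation (\<lambda>\<omega>. ?A \<omega> * \<epsilon> \<omega>) = 0"
    using fJ_sq eps_sq
    by (intro integral_mult_eq_0_if_cond_exp_eq_0[OF X_meas eps_meas fJ_meas eps_cond])
       (simp add: integrable_mult_of_square_integrable)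
  note copy_indep = integral_mult_replace_coords_copy_indep[OF X'_indep X'_meas _ fJ_meas _ dep(1), where Z=X]
  have Be: "expectation (\<lambda>\<omega>. ?B \<omega> * \<epsilon> \<omega>) = 0"
    using copy_indep[where k="\<lambda>(x, y). y - fJ x - fJbar x" and \<xi>=\<epsilon>] B1 eps1 mean_eps
    by (simp add: model)
  have AB: "expectation (\<lambda>\<omega>. ?A \<omega> * ?B \<omega>) = (expectation ?A)\<^sup>2"
    using copy_indep[where k="fJ \<circ> fst" and \<xi>="?A"] B1 A1 same_mean
    by (simp add: mult.commute power2_eq_square)
  have "grouped_importance M Y (\<lambda>x. fJ x + fJbar x) X X' J
      = expectation (\<lambda>\<omega>. (?A \<omega> - ?B \<omega> + \<epsilon> \<omega>)\<^sup>2) - expectation (\<lambda>\<omega>. (\<epsilon> \<omega>)\<^sup>2)"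
    by (intro grouped_importance_additive_model model dep(2))
  also have "\<dots> = 2 * variance ?A"
    by (rule expectation_square_diff_eq_twice_variance) (simp_all add: fJ_sq B2 eps_sq Ae Be AB same_moment)
  finally show ?thesis .
qed

end
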